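(* Assume the setting described in the context, so in particular $\tilde\lambda_{s,k}\neq1$ for $s=a,b$ and all $k=1,\dots,d$. Fix $j\in\{1,\dots,d\}$ and integers $L\ge\ell\ge2$, and let $0\le m<n$ be integers with $n-m\ge2$. Put $\Lambda'=\Lambda^{(j)}_n\setminus\Lambda^{(j)}_m$. Then $$C(\Lambda',ab)\le C(\Lambda',a)\,C(\Lambda',b)\le \tilde c\,C(\Lambda',ab),$$ where $$\tilde c:=\Bigl(1-\prod_{k=1}^d\bigl(\max\{1+e^{-2|\log\tilde\lambda_{a,k}|},\,1+e^{-2|\log\tilde\lambda_{b,k}|}\}\bigr)^{-1}\Bigr)^{-1}.$$
   Context: Let $\lambda_{s,k}>0$ ($s\in\{a,b\}$, $k=1,\dots,d$), $\lambda_s^x:=\prod_k\lambda_{s,k}^{x_k}$ for $x\in\mathbb{Z}^d$, and for finite $\Lambda\subset\mathbb{Z}^d$ let $C(\Lambda,s):=\sum_{x\in\Lambda}\lambda_s^{2x}$ and $C(\Lambda,ab):=\sum_{x,y\in\Lambda,\,x\neq y}\lambda_a^{2x}\lambda_b^{2y}$. Volumes $\Lambda_{\vec L}$, $\vec L=(L_1,\dots,L_d)\in\mathbb{N}^d$, are defined in one of two ways. Case 1 ($\lambda_{a,1}\ne1$, $\lambda_{b,1}\ne1$): choose integers $v(k)\ge0$, $k=2,\dots,d$, with $\tilde\lambda_{s,k}:=\lambda_{s,k}\lambda_{s,1}^{-v(k)}\ne1$ for $s=a,b$, set $\tilde\lambda_{s,1}:=\lambda_{s,1}$, and $\Lambda_{\vec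 L}:=\{x\in\mathbb{Z}^d: 0\le x_1+\sum_{k\ge2}v(k)x_k\le L_1-1,\ 0\le x_k\le L_k-1\ (k\ge2)\}$. Case 2 ($d\ge2$, $\lambda_{a,1}\ne1$, $\lambda_{b,2}\ne1$, $\lambda_{a,2}=\lambda_{b,1}=1$): set $\tilde\lambda_{a,1}:=\lambda_{a,1}$, $\tilde\lambda_{a,2}:=\lambda_{a,1}^{-1}$, $\tilde\lambda_{b,1}=\tilde\lambda_{b,2}:=\lambda_{b,2}$, choose integers $v(k)\ge0$, $k\ge3$, with $\tilde\lambda_{s,k}:=\lambda_{s,k}\tilde\lambda_{s,1}^{-v(k)}\ne1$, and $\Lambda_{\vec L}:=\{x\in\mathbb{Z}^d: 0\le \tfrac{x_1+x_2}{2}+\sum_{k\ge3}v(k)x_k\le L_1-\tfrac12,\ 0\le\tfrac{x_2-x_1}{2}\le L_2-\tfrac12,\ 0\le x_k\le L_k-1\ (k\ge3)\}$. For fixed $j$, $L$, $\ell$ and integer $n\ge0$, $\Lambda^{(j)}_n:=\Lambda_{(L,\dots,L,n,\ell,\dots,\ell)}$ with $n$ in the $j$-th entry, $L$ in entries $<j$ and $\ell$ in entries $>j$ (so $\Lambda^{(j)}_0=\emptyset$). *)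

theory Defs
  imports Complex_Main
begin

definition zd :: "nat \<Rightarrow> (nat \<Rightarrow> int) set" where
  "zd d = {x. \<forall>k. (k < 1 \<or> d < k) \<longrightarrow> x k = 0}"

definition lpow :: "nat \<Rightarrow> (nat \<Rightarrow> real) \<Rightarrow> (nat \<Rightarrow> int) \<Rightarrow> real" where
  "lpow d lam x = (\<Prod>k=1..d. lam k powi x k)"

definition Cs :: "nat \<Rightarrow> (nat \<Rightarrow> real) \<Rightarrow> (nat \<Rightarrow> int) set \<Rightarrow> real" where
  "Cs d lam Lam = (\<Sum>x\<in>Lam. lpow d lam (\<lambda>k. 2 * x k))"

definition Cab :: "nat \<Rightarrow> (nat \<Rightarrow> real) \<Rightarrow> (nat \<Rightarrow> real) \<Rightarrow> (nat \<Rightarrow> int) set \<Rightarrow> real" where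
  "Cab d la lb Lam =
     (\<Sum>(x,y)\<in>{(x,y). x \<in> Lam \<and> y \<in> Lam \<and> x \<noteq> y}.
        lpow d la (\<lambda>k. 2 * x k) * lpow d lb (\<lambda>k. 2 * y k))"

datatype vcase = Case1 | Case2

fun tla :: "vcase \<Rightarrow> (nat \<Rightarrow> real) \<Rightarrow> (nat \<Rightarrow> real) \<Rightarrow> (nat \<Rightarrow> nat) \<Rightarrow> nat \<Rightarrow> real" where
  "tla Case1 la lb v k = (if k = 1 then la 1 else la k * la 1 powi (- int (v k)))"
| "tla Case2 la lb v k = (if k = 1 then la 1 else if k = 2 then inverse (la 1)
                          else la k * la 1 powi (- int (v k)))"

fun tlb :: "vcase \<Rightarrow> (nat \<Rightarrow> real) \<Rightarrow> (nat \<Rightarrow> real) \<Rightarrow> (nat \<Rightarrow> nat) \<Rightarrow> nat \<Rightarrow> real" where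
  "tlb Case1 la lb v k = (if k = 1 then lb 1 else lb k * lb 1 powi (- int (v k)))"
| "tlb Case2 la lb v k = (if k = 1 \<or> k = 2 then lb 2
                          else lb k * lb 2 powi (- int (v k)))"

fun admissible :: "vcase \<Rightarrow> nat \<Rightarrow> (nat \<Rightarrow> real) \<Rightarrow> (nat \<Rightarrow> real) \<Rightarrow> (nat \<Rightarrow> nat) \<Rightarrow> bool" where
  "admissible Case1 d la lb v \<longleftrightarrow>
     la 1 \<noteq> 1 \<and> lb 1 \<noteq> 1 \<and>
     (\<forall>k\<in>{2..d}. tla Case1 la lb v k \<noteq> 1 \<and> tlb Case1 la lb v k \<noteq> 1)"
| "admissible Case2 d la lb v \<longleftrightarrow>
     2 \<le> d \<and> la 1 \<noteq> 1 \<and> lb 2 \<noteq> 1 \<and> la 2 = 1 \<and> lb 1 = 1 \<and>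
     (\<forall>k\<in>{3..d}. tla Case2 la lb v k \<noteq> 1 \<and> tlb Case2 la lb v k \<noteq> 1)"

fun volume :: "vcase \<Rightarrow> nat \<Rightarrow> (nat \<Rightarrow> nat) \<Rightarrow> (nat \<Rightarrow> nat) \<Rightarrow> (nat \<Rightarrow> int) set" where
  "volume Case1 d v Lv =
     {x \<in> zd d. 0 \<le> x 1 + (\<Sum>k=2..d. int (v k) * x k)
              \<and> x 1 + (\<Sum>k=2..d. int (v k) * x k) \<le> int (Lv 1) - 1
              \<and> (\<forall>k\<in>{2..d}. 0 \<le> x k \<and> x k \<le> int (Lv k) - 1)}"
| "volume Case2 d v Lv =
     {x \<in> zd d. 0 \<le> (real_of_int (x 1) + real_of_int (x 2)) / 2
                     + (\<Sum>k=3..d. real (v k) * real_of_int (x k))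
              \<and> (real_of_int (x 1) + real_of_int (x 2)) / 2
                     + (\<Sum>k=3..d. real (v k) * real_of_int (x k)) \<le> real (Lv 1) - 1/2
              \<and> 0 \<le> (real_of_int (x 2) - real_of_int (x 1)) / 2
              \<and> (real_of_int (x 2) - real_of_int (x 1)) / 2 \<le> real (Lv 2) - 1/2
              \<and> (\<forall>k\<in>{3..d}. 0 \<le> x k \<and> x k \<le> int (Lv k) - 1)}"

definition volj :: "vcase \<Rightarrow> nat \<Rightarrow> (nat \<Rightarrow> nat) \<Rightarrow> nat \<Rightarrow> nat \<Rightarrow> nat \<Rightarrow> nat \<Rightarrow> (nat \<Rightarrow> int) set" where
  "volj cs d v j L l n = volume cs d v (\<lambda>k. if k < j then L else if k = j then n else l)"

definition ctilde :: "vcase \<Rightarrow> nat \<Rightarrow> (nat \<Rightarrow> real) \<Rightarrow> (nat \<Rightarrow> real) \<Rightarrow> (nat \<Rightarrow> nat) \<Rightarrow> real" where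
  "ctilde cs d la lb v =
     inverse (1 - inverse (\<Prod>k=1..d.
        max (1 + exp (-2 * \<bar>ln (tla cs la lb v k)\<bar>)) (1 + exp (-2 * \<bar>ln (tlb cs la lb v k)\<bar>))))"

end

theory Submission
  imports Defs "HOL-Library.FuncSet"
begin

(*
  Write D for the diagonal sum of lambda_a^(2x) lambda_b^(2x) over Lambda'. Since
  C(Lambda',a) C(Lambda',b) = C(Lambda',ab) + D, the lower bound is trivial, and the upper bound
  follows once P * D <= C(Lambda',a) C(Lambda',b) with P the product of the factors inside c~ (P > 1).
  In coordinates adapted to the volume (a shear in Case 1; in Case 2 the rotated coordinates
  (x1+x2)/2, (x2-x1)/2 together with the parity of x1+x2) the set Lambda' becomes a box of integer
  points with at least two points on every side, and the weights become monomials in the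
  tilde-lambdas.  All three sums then factor over the coordinates, which reduces the claim to
  one-dimensional geometric sums:  (1+r) sum_t (alpha beta)^t <= sum_t alpha^t * sum_t beta^t
  whenever 0 <= r <= min(alpha, 1/alpha) and there are at least two terms, applied with
  alpha = tilde-lambda^2 and r = exp(-2 |log tilde-lambda|) = min(alpha, 1/alpha).
*)

lemma sum_product_offdiag_diag:
  fixes wa wb :: "'a \<Rightarrow> real"
  assumes "finite W"
  shows "(\<Sum>x\<in>W. wa x) * (\<Sum>x\<in>W. wb x)
       = (\<Sum>(x,y)\<in>{(x,y). x \<in> W \<and> y \<in> W \<and> x \<noteq> y}. wa x * wb y) + (\<Sum>x\<in>W. wa x * wb x)"
proof -
  let ?Off = "{(x,y). x \<in> W \<and> y \<in> W \<and> x \<noteq> y}" and ?Diag = "(\<lambda>x. (x,x)) ` W"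
  have "(\<Sum>x\<in>W. wa x) * (\<Sum>x\<in>W. wb x) = (\<Sum>(x,y)\<in>?Off \<union> ?Diag. wa x * wb y)"
    by (simp add: sum_product sum.cartesian_product) (rule sum.cong; auto)
  also have "\<dots> = (\<Sum>(x,y)\<in>?Off. wa x * wb y) + (\<Sum>(x,y)\<in>?Diag. wa x * wb y)"
    by (rule sum.union_disjoint)
       (auto intro: finite_subset[of _ "W \<times> W"] simp: assms)
  also have "(\<Sum>(x,y)\<in>?Diag. wa x * wb y) = (\<Sum>x\<in>W. wa x * wb x)"
    by (subst sum.reindex) (auto simp: inj_on_def)
  finally show ?thesis .
qed

lemma offdiag_sum_bounds:
  fixes wa wb :: "'a \<Rightarrow> real" and P :: real
  assumes "finite W" and nonneg: "\<And>x. x \<in> W \<Longrightarrow> 0 \<le> wa x * wb x" and "1 < P"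
    and diag: "P * (\<Sum>x\<in>W. wa x * wb x) \<le> (\<Sum>x\<in>W. wa x) * (\<Sum>x\<in>W. wb x)"
  defines "Off \<equiv> \<Sum>(x,y)\<in>{(x,y). x \<in> W \<and> y \<in> W \<and> x \<noteq> y}. wa x * wb y"
  shows "Off \<le> (\<Sum>x\<in>W. wa x) * (\<Sum>x\<in>W. wb x)
       \<and> (\<Sum>x\<in>W. wa x) * (\<Sum>x\<in>W. wb x) \<le> inverse (1 - inverse P) * Off"
proof -
  define X where "X = (\<Sum>x\<in>W. wa x) * (\<Sum>x\<in>W. wb x)"
  define D where "D = (\<Sum>x\<in>W. wa x * wb x)"
  have X: "X = Off + D"
    unfolding X_def D_def Off_def by (rule sum_product_offdiag_diag[OF \<open>finite W\<close>])
  have "0 \<le> D" unfolding D_def using nonneg by (rule sum_nonneg)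
  moreover have "(P - 1) * X \<le> P * Off"
    using diag X by (simp add: X_def D_def algebra_simps)
  ultimately show ?thesis
    using X \<open>1 < P\<close> by (simp add: X_def field_simps)
qed

section \<open>Products of geometric sums\<close>

lemma geometric_sums_product_ge:
  fixes \<alpha> \<beta> r :: real
  assumes "0 < \<alpha>" "0 < \<beta>" "0 \<le> r" "r \<le> \<alpha>" "r * \<alpha> \<le> 1" "2 \<le> N"
  shows "(1 + r) * (\<Sum>t<N. (\<alpha> * \<beta>) ^ t) \<le> (\<Sum>t<N. \<alpha> ^ t) * (\<Sum>t<N. \<beta> ^ t)"
  using \<open>2 \<le> N\<close>
proof (induction N rule: nat_induct_at_least)
  case base
  have "\<alpha> * (\<beta> * r) \<le> \<beta>"
    using mult_right_mono[OF \<open>r * \<alpha> \<le> 1\<close>, of \<beta>] assms(2) by (simp add: mult_ac)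
  then show ?case using assms by (simp add: numeral_2_eq_2 algebra_simps; linarith)
next
  case (Suc N)
  \<comment> \<open>the new diagonal term \<open>r (\<alpha>\<beta>)^N\<close> is absorbed by the new off-diagonal term \<open>\<alpha>^(N-1) \<beta>^N\<close>\<close>
  have "r * (\<alpha> * \<beta>) ^ N = (r * \<alpha>) * (\<alpha> ^ (N - 1) * \<beta> ^ N)"
    using Suc.hyps by (cases N) (auto simp: power_mult_distrib)
  also have "\<dots> \<le> \<alpha> ^ (N - 1) * \<beta> ^ N"
    using assms by (intro mult_left_le_one_le) auto
  also have "\<dots> \<le> (\<Sum>t<N. \<alpha> ^ t) * \<beta> ^ N"
    using Suc.hyps assms by (intro mult_right_mono member_le_sum) auto
  finally have "r * (\<alpha> * \<beta>) ^ N \<le> (\<Sum>t<N. \<alpha> ^ t) * \<beta> ^ N" .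
  moreover have "0 \<le> \<alpha> ^ N * (\<Sum>t<N. \<beta> ^ t)"
    using assms by (intro mult_nonneg_nonneg sum_nonneg) auto
  ultimately show ?case
    using Suc.IH by (simp add: algebra_simps)
qed

lemma sum_powi_double_atLeastAtMost:
  fixes x :: real and c e :: int
  assumes "x \<noteq> 0" "c \<le> e"
  shows "(\<Sum>t\<in>{c..e}. x powi (2 * t)) = x powi (2 * c) * (\<Sum>i<nat (e - c + 1). (x\<^sup>2) ^ i)"
proof -
  have "{c..e} = (\<lambda>i. c + int i) ` {..<nat (e - c + 1)}"
    by (auto intro!: image_eqI[where x="nat (t - c)" for t])
  then have "(\<Sum>t\<in>{c..e}. x powi (2 * t)) = (\<Sum>i<nat (e - c + 1). x powi (2 * c + int (2 * i)))"
    by (simp add: sum.reindex inj_on_def algebra_simps)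
  also have "\<dots> = (\<Sum>i<nat (e - c + 1). x powi (2 * c) * (x\<^sup>2) ^ i)"
    using assms by (intro sum.cong) (simp_all add: power_int_add power_mult del: of_nat_mult)
  finally show ?thesis by (simp add: sum_distrib_left)
qed

lemma interval_sums_product_ge:
  fixes a b r :: real and c e :: int
  assumes "0 < a" "0 < b" "0 \<le> r" "r \<le> a\<^sup>2" "r * a\<^sup>2 \<le> 1" "c < e"
  shows "(1 + r) * (\<Sum>t\<in>{c..e}. a powi (2 * t) * b powi (2 * t))
       \<le> (\<Sum>t\<in>{c..e}. a powi (2 * t)) * (\<Sum>t\<in>{c..e}. b powi (2 * t))"
proof -
  define N where "N = nat (e - c + 1)"
  have sums: "(\<Sum>t\<in>{c..e}. x powi (2 * t)) = x powi (2 * c) * (\<Sum>i<N. (x\<^sup>2) ^ i)"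
    if "x \<noteq> 0" for x :: real
    using sum_powi_double_atLeastAtMost[OF that] assms(6) by (simp add: N_def)
  have "(1 + r) * (\<Sum>t\<in>{c..e}. a powi (2 * t) * b powi (2 * t))
      = (1 + r) * (\<Sum>t\<in>{c..e}. (a * b) powi (2 * t))"
    by (simp add: power_int_mult_distrib)
  also have "\<dots> = (a * b) powi (2 * c) * ((1 + r) * (\<Sum>i<N. ((a * b)\<^sup>2) ^ i))"
    using assms by (simp add: sums[of "a * b"])
  also have "\<dots> = a powi (2 * c) * b powi (2 * c) * ((1 + r) * (\<Sum>i<N. (a\<^sup>2 * b\<^sup>2) ^ i))"
    by (simp add: power_int_mult_distrib power_mult_distrib)
  also have "\<dots> \<le> a powi (2 * c) * b powi (2 * c) * ((\<Sum>i<N. (a\<^sup>2) ^ i) * (\<Sum>i<N. (b\<^sup>2) ^ i))"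
    using assms by (intro mult_left_mono geometric_sums_product_ge) (auto simp: N_def)
  also have "\<dots> = (\<Sum>t\<in>{c..e}. a powi (2 * t)) * (\<Sum>t\<in>{c..e}. b powi (2 * t))"
    using assms by (simp add: sums)
  finally show ?thesis .
qed

lemma exp_neg_abs_ln_bounds:
  fixes a :: real
  assumes "0 < a"
  shows "exp (-2 * \<bar>ln a\<bar>) \<le> a\<^sup>2 \<and> exp (-2 * \<bar>ln a\<bar>) * a\<^sup>2 \<le> 1"
proof -
  have "a\<^sup>2 = exp (ln (a\<^sup>2))"
    using assms by simp
  also have "\<dots> = exp (2 * ln a)"
    using assms by (simp add: ln_realpow)
  finally have "a\<^sup>2 = exp (2 * ln a)" .
  then show ?thesis by (simp add: exp_add[symmetric]) arith
qed

definition gain :: "real \<Rightarrow> real \<Rightarrow> real" where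
  "gain a b = max (1 + exp (-2 * \<bar>ln a\<bar>)) (1 + exp (-2 * \<bar>ln b\<bar>))"

lemma one_less_gain: "1 < gain a b"
  by (simp add: gain_def less_max_iff_disj)

lemma gain_interval_sums_le:
  fixes a b :: real and c e :: int
  assumes "0 < a" "0 < b" "c < e"
  shows "gain a b * (\<Sum>t\<in>{c..e}. a powi (2 * t) * b powi (2 * t))
       \<le> (\<Sum>t\<in>{c..e}. a powi (2 * t)) * (\<Sum>t\<in>{c..e}. b powi (2 * t))"
proof (cases "exp (-2 * \<bar>ln b\<bar>) \<le> exp (-2 * \<bar>ln a\<bar>)")
  case True
  then show ?thesis
    using interval_sums_product_ge[of a b "exp (-2 * \<bar>ln a\<bar>)"] exp_neg_abs_ln_bounds assms
    by (simp add: gain_def max_def)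
next
  case False
  then show ?thesis
    using interval_sums_product_ge[of b a "exp (-2 * \<bar>ln b\<bar>)"] exp_neg_abs_ln_bounds assms
    by (simp add: gain_def max_def mult_ac)
qed

section \<open>Boxes of lattice points\<close>

definition box :: "nat \<Rightarrow> (nat \<Rightarrow> int set) \<Rightarrow> (nat \<Rightarrow> int) set" where
  "box d I = {y \<in> zd d. \<forall>k\<in>{1..d}. y k \<in> I k}"

lemma box_iff: "y \<in> box d I \<longleftrightarrow> y \<in> zd d \<and> (\<forall>k\<in>{1..d}. y k \<in> I k)"
  by (simp add: box_def)

lemma box_mono: "(\<And>k. k \<in> {1..d} \<Longrightarrow> I k \<subseteq> J k) \<Longrightarrow> box d I \<subseteq> box d J"
  unfolding box_def by blast

lemma box_subset_zd: "box d I \<subseteq> zd d"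
  by (auto simp: box_def)

lemma bij_betw_restrict_box: "bij_betw (\<lambda>y. restrict y {1..d}) (box d I) (PiE {1..d} I)"
proof (rule bij_betw_byWitness[where f'="\<lambda>g k. if k \<in> {1..d} then g k else 0"])
  show "\<forall>y\<in>box d I. (\<lambda>k. if k \<in> {1..d} then restrict y {1..d} k else 0) = y"
    by (auto simp: box_def zd_def fun_eq_iff not_less_eq_eq)
  show "\<forall>g\<in>PiE {1..d} I. restrict (\<lambda>k. if k \<in> {1..d} then g k else 0) {1..d} = g"
    by (auto simp: PiE_def extensional_def fun_eq_iff)
  show "(\<lambda>y. restrict y {1..d}) ` box d I \<subseteq> PiE {1..d} I"
    by (auto simp: box_def)
  show "(\<lambda>g k. if k \<in> {1..d} then g k else 0) ` PiE {1..d} I \<subseteq> box d I"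
    by (auto simp: box_def zd_def)
qed

lemma finite_box:
  assumes "\<And>k. k \<in> {1..d} \<Longrightarrow> finite (I k)"
  shows "finite (box d I)"
proof -
  have "finite (PiE {1..d} I)"
    using assms by (intro finite_PiE) auto
  then show ?thesis
    using bij_betw_finite[OF bij_betw_restrict_box] by blast
qed

lemma sum_box_prod:
  fixes f :: "nat \<Rightarrow> int \<Rightarrow> 'a::comm_semiring_1"
  assumes "\<And>k. k \<in> {1..d} \<Longrightarrow> finite (I k)"
  shows "(\<Sum>y\<in>box d I. \<Prod>k=1..d. f k (y k)) = (\<Prod>k=1..d. \<Sum>t\<in>I k. f k t)"
proof -
  have "(\<Sum>y\<in>box d I. \<Prod>k=1..d. f k (y k)) = (\<Sum>y\<in>box d I. \<Prod>k=1..d. f k (restrict y {1..d} k))"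
    by (intro sum.cong prod.cong) auto
  also have "\<dots> = (\<Sum>g\<in>PiE {1..d} I. \<Prod>k=1..d. f k (g k))"
    by (rule sum.reindex_bij_betw[OF bij_betw_restrict_box])
  also have "\<dots> = (\<Prod>k=1..d. \<Sum>t\<in>I k. f k t)"
    using assms by (intro prod_sum_PiE[symmetric]) auto
  finally show ?thesis .
qed

lemma lpow_pos: "(\<And>k. k \<in> {1..d} \<Longrightarrow> 0 < lam k) \<Longrightarrow> 0 < lpow d lam x"
  unfolding lpow_def by (intro prod_pos zero_less_power_int) auto

lemma gain_box_sums_le:
  fixes ta tb :: "nat \<Rightarrow> real" and c e :: "nat \<Rightarrow> int"
  assumes "\<And>k. k \<in> {1..d} \<Longrightarrow> 0 < ta k \<and> 0 < tb k \<and> c k < e k"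
  defines "B \<equiv> box d (\<lambda>k. {c k..e k})"
  shows "(\<Prod>k=1..d. gain (ta k) (tb k)) * (\<Sum>y\<in>B. lpow d ta (\<lambda>k. 2 * y k) * lpow d tb (\<lambda>k. 2 * y k))
       \<le> (\<Sum>y\<in>B. lpow d ta (\<lambda>k. 2 * y k)) * (\<Sum>y\<in>B. lpow d tb (\<lambda>k. 2 * y k))"
proof -
  have sum_B: "(\<Sum>y\<in>B. \<Prod>k=1..d. f k (y k)) = (\<Prod>k=1..d. \<Sum>t\<in>{c k..e k}. f k t)"
    for f :: "nat \<Rightarrow> int \<Rightarrow> real"
    unfolding B_def by (rule sum_box_prod) simp
  have "(\<Prod>k=1..d. gain (ta k) (tb k)) * (\<Sum>y\<in>B. lpow d ta (\<lambda>k. 2 * y k) * lpow d tb (\<lambda>k. 2 * y k))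
      = (\<Prod>k=1..d. gain (ta k) (tb k) * (\<Sum>t\<in>{c k..e k}. ta k powi (2 * t) * tb k powi (2 * t)))"
    using sum_B[of "\<lambda>k t. ta k powi (2 * t) * tb k powi (2 * t)"]
    by (simp add: lpow_def prod.distrib)
  also have "\<dots> \<le> (\<Prod>k=1..d. (\<Sum>t\<in>{c k..e k}. ta k powi (2 * t)) * (\<Sum>t\<in>{c k..e k}. tb k powi (2 * t)))"
    using assms less_trans[OF zero_less_one one_less_gain]
    by (intro prod_mono conjI gain_interval_sums_le mult_nonneg_nonneg sum_nonneg less_imp_le) auto
  also have "\<dots> = (\<Sum>y\<in>B. lpow d ta (\<lambda>k. 2 * y k)) * (\<Sum>y\<in>B. lpow d tb (\<lambda>k. 2 * y k))"
    using sum_B[of "\<lambda>k t. ta k powi (2 * t)"] sum_B[of "\<lambda>k t. tb k powi (2 * t)"]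
    by (simp add: lpow_def prod.distrib)
  finally show ?thesis .
qed

definition slab :: "nat \<Rightarrow> nat \<Rightarrow> nat \<Rightarrow> nat \<Rightarrow> nat \<Rightarrow> nat \<Rightarrow> int set" where
  "slab j L l m n k = {(if k = j then int m else 0) .. int (if k < j then L else if k = j then n else l) - 1}"

lemma box_diff_slab:
  assumes "j \<in> {1..d}" "m < n"
  shows "box d (\<lambda>k. {0 .. int (if k < j then L else if k = j then n else l) - 1})
           - box d (\<lambda>k. {0 .. int (if k < j then L else if k = j then m else l) - 1})
         = box d (slab j L l m n)"
    (is "box d ?I\<^sub>n - box d ?I\<^sub>m = _")
proof (intro set_eqI iffI)
  fix z assume z: "z \<in> box d (slab j L l m n)"
  have "box d (slab j L l m n) \<subseteq> box d ?I\<^sub>n"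
    by (rule box_mono) (auto simp: slab_def)
  with z have "z \<in> box d ?I\<^sub>n"
    by blast
  moreover have "z j \<in> slab j L l m n j"
    using z assms(1) unfolding box_iff by blast
  then have "z \<notin> box d ?I\<^sub>m"
    using assms(1) by (auto simp: box_iff slab_def)
  ultimately show "z \<in> box d ?I\<^sub>n - box d ?I\<^sub>m"
    by blast
next
  fix z assume z: "z \<in> box d ?I\<^sub>n - box d ?I\<^sub>m"
  have "int m \<le> z j"
  proof (rule ccontr)
    assume "\<not> int m \<le> z j"
    with z have "z \<in> box d ?I\<^sub>m"
      by (auto simp: box_iff)
    with z show False by blast
  qed
  with z show "z \<in> box d (slab j L l m n)"
    by (auto simp: box_iff slab_def)
qed

lemma gain_slab_sums_le:
  fixes ta tb :: "nat \<Rightarrow> real" and j L l m n :: nat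
  assumes "\<And>k. k \<in> {1..d} \<Longrightarrow> 0 < ta k \<and> 0 < tb k" "2 \<le> l" "l \<le> L" "m + 2 \<le> n"
  defines "B \<equiv> box d (slab j L l m n)"
  shows "(\<Prod>k=1..d. gain (ta k) (tb k)) * (\<Sum>y\<in>B. lpow d ta (\<lambda>k. 2 * y k) * lpow d tb (\<lambda>k. 2 * y k))
       \<le> (\<Sum>y\<in>B. lpow d ta (\<lambda>k. 2 * y k)) * (\<Sum>y\<in>B. lpow d tb (\<lambda>k. 2 * y k))"
proof -
  define c :: "nat \<Rightarrow> int" where "c k = (if k = j then int m else 0)" for k
  define e :: "nat \<Rightarrow> int" where "e k = int (if k < j then L else if k = j then n else l) - 1" for k
  have "B = box d (\<lambda>k. {c k..e k})"
    unfolding B_def c_def e_def slab_def ..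
  moreover have "c k < e k" for k
    using assms(2-4) by (simp add: c_def e_def)
  ultimately show ?thesis
    using assms(1) by (simp only:) (rule gain_box_sums_le, simp)
qed

lemma volj_diff_eq_box:
  assumes "j \<in> {1..d}" "m < n"
    and volume_eq: "\<And>Lv. volume cs d v Lv = {x \<in> zd d. F x \<in> box d (\<lambda>k. {0 .. int (Lv k) - 1})}"
  shows "volj cs d v j L l n - volj cs d v j L l m = {x \<in> zd d. F x \<in> box d (slab j L l m n)}"
  unfolding volj_def volume_eq box_diff_slab[OF assms(1,2), symmetric] by auto

lemma fun_upd_in_zd: "k \<in> {1..d} \<Longrightarrow> x \<in> zd d \<Longrightarrow> x(k := t) \<in> zd d"
  by (simp add: zd_def)

definition vsum :: "nat \<Rightarrow> nat \<Rightarrow> (nat \<Rightarrow> nat) \<Rightarrow> (nat \<Rightarrow> int) \<Rightarrow> int" where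
  "vsum i d v x = (\<Sum>k=i..d. int (v k) * x k)"

lemma vsum_fun_upd [simp]: "k < i \<Longrightarrow> vsum i d v (x(k := t)) = vsum i d v x"
  unfolding vsum_def by (rule sum.cong) auto

lemma power_int_sum:
  fixes x :: "'a::field"
  assumes "finite A" "x \<noteq> 0"
  shows "x powi (\<Sum>k\<in>A. f k) = (\<Prod>k\<in>A. x powi f k)"
  using assms by (induction A rule: finite_induct) (auto simp: power_int_add)

lemma prod_powi_twisted:
  fixes lam :: "nat \<Rightarrow> real" and mu :: real
  assumes "mu \<noteq> 0"
  shows "(\<Prod>k=i..d. (lam k * mu powi (- int (v k))) powi (2 * y k))
       = (\<Prod>k=i..d. lam k powi (2 * y k)) * mu powi (-2 * vsum i d v y)"
proof -
  have "(\<Prod>k=i..d. (lam k * mu powi (- int (v k))) powi (2 * y k))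
      = (\<Prod>k=i..d. lam k powi (2 * y k)) * (\<Prod>k=i..d. mu powi (-2 * (int (v k) * y k)))"
    by (simp add: prod.distrib power_int_mult_distrib power_int_mult[symmetric] algebra_simps)
  also have "(\<Prod>k=i..d. mu powi (-2 * (int (v k) * y k))) = mu powi (-2 * vsum i d v y)"
    using assms by (simp add: vsum_def power_int_sum sum_distrib_left)
  finally show ?thesis .
qed

section \<open>Case 1: sheared coordinates\<close>

definition shear :: "nat \<Rightarrow> (nat \<Rightarrow> nat) \<Rightarrow> (nat \<Rightarrow> int) \<Rightarrow> nat \<Rightarrow> int" where
  "shear d v x = x(1 := x 1 + vsum 2 d v x)"

definition unshear :: "nat \<Rightarrow> (nat \<Rightarrow> nat) \<Rightarrow> (nat \<Rightarrow> int) \<Rightarrow> nat \<Rightarrow> int" where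
  "unshear d v y = y(1 := y 1 - vsum 2 d v y)"

lemma shear_unshear [simp]: "shear d v (unshear d v y) = y"
  by (simp add: shear_def unshear_def)

lemma unshear_shear [simp]: "unshear d v (shear d v x) = x"
  by (simp add: shear_def unshear_def)

lemma volume_Case1_eq:
  assumes "1 \<le> d"
  shows "volume Case1 d v Lv = {x \<in> zd d. shear d v x \<in> box d (\<lambda>k. {0 .. int (Lv k) - 1})}"
proof -
  have "{1..d} = insert 1 {2..d}"
    using assms by auto
  then show ?thesis
    using assms by (auto simp: box_iff shear_def vsum_def fun_upd_in_zd)
qed

lemma volj_diff_Case1_eq:
  assumes "j \<in> {1..d}" "m < n"
  shows "volj Case1 d v j L l n - volj Case1 d v j L l m = unshear d v ` box d (slab j L l m n)"
proof -
  have d: "1 \<le> d"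
    using assms(1) by simp
  have "unshear d v y \<in> zd d" if "y \<in> box d (slab j L l m n)" for y
    using that d box_subset_zd by (auto simp: unshear_def intro!: fun_upd_in_zd)
  then show ?thesis
    unfolding volj_diff_eq_box[OF assms volume_Case1_eq[OF d]]
    by (auto intro!: image_eqI[where x="shear d v x" for x])
qed

lemma sum_volj_diff_Case1:
  assumes "j \<in> {1..d}" "m < n"
  shows "finite (volj Case1 d v j L l n - volj Case1 d v j L l m)"
    and "(\<Sum>x\<in>volj Case1 d v j L l n - volj Case1 d v j L l m. g x)
       = (\<Sum>y\<in>box d (slab j L l m n). g (unshear d v y))"
proof -
  have "finite (box d (slab j L l m n))"
    by (rule finite_box) (simp add: slab_def)
  moreover have "inj_on (unshear d v) (box d (slab j L l m n))"
    by (rule inj_on_inverseI[where g="shear d v"]) simp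
  ultimately show "finite (volj Case1 d v j L l n - volj Case1 d v j L l m)"
    and "(\<Sum>x\<in>volj Case1 d v j L l n - volj Case1 d v j L l m. g x)
       = (\<Sum>y\<in>box d (slab j L l m n). g (unshear d v y))"
    unfolding volj_diff_Case1_eq[OF assms] by (simp_all add: sum.reindex)
qed

lemma lpow_unshear:
  fixes lam :: "nat \<Rightarrow> real"
  assumes "1 \<le> d" "lam 1 \<noteq> 0"
  shows "lpow d lam (\<lambda>k. 2 * unshear d v y k)
       = lpow d (\<lambda>k. if k = 1 then lam 1 else lam k * lam 1 powi (- int (v k))) (\<lambda>k. 2 * y k)"
proof -
  have split: "(\<Prod>k=1..d. f k) = f 1 * (\<Prod>k=2..d. f k)" for f :: "nat \<Rightarrow> real"
    using assms(1) by (simp add: prod.atLeast_Suc_atMost numeral_2_eq_2)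
  have "lpow d lam (\<lambda>k. 2 * unshear d v y k)
      = lam 1 powi (2 * y 1) * lam 1 powi (-2 * vsum 2 d v y) * (\<Prod>k=2..d. lam k powi (2 * y k))"
    unfolding lpow_def split using assms(2)
    by (simp add: unshear_def power_int_add[symmetric] algebra_simps)
  also have "\<dots> = lpow d (\<lambda>k. if k = 1 then lam 1 else lam k * lam 1 powi (- int (v k))) (\<lambda>k. 2 * y k)"
    unfolding lpow_def split using assms(2) by (simp add: prod_powi_twisted)
  finally show ?thesis .
qed

section \<open>Case 2: rotated coordinates\<close>

lemma half_nonneg_iff: "0 \<le> real_of_int z / 2 + real_of_int s \<longleftrightarrow> 0 \<le> z div 2 + s"
proof -
  have "0 \<le> real_of_int z / 2 + real_of_int s \<longleftrightarrow> 0 \<le> z + 2 * s"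
    by linarith
  also have "\<dots> \<longleftrightarrow> 0 \<le> z div 2 + s"
    by presburger
  finally show ?thesis .
qed

lemma half_le_iff: "real_of_int z / 2 + real_of_int s \<le> real M - 1/2 \<longleftrightarrow> z div 2 + s \<le> int M - 1"
proof -
  have "real_of_int z / 2 + real_of_int s \<le> real M - 1/2 \<longleftrightarrow> z + 2 * s \<le> 2 * int M - 1"
    by linarith
  also have "\<dots> \<longleftrightarrow> z div 2 + s \<le> int M - 1"
    by presburger
  finally show ?thesis .
qed

text \<open>In Case 2 the natural coordinates are \<open>(x\<^sub>1 + x\<^sub>2)/2\<close> and \<open>(x\<^sub>2 - x\<^sub>1)/2\<close>, which are
  integers only up to the parity \<open>p\<close> of \<open>x\<^sub>1 + x\<^sub>2\<close>: a point is recovered from its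
  rounded-down coordinates together with \<open>p\<close>.\<close>

definition rotated_coords :: "nat \<Rightarrow> (nat \<Rightarrow> nat) \<Rightarrow> (nat \<Rightarrow> int) \<Rightarrow> nat \<Rightarrow> int" where
  "rotated_coords d v x = x(1 := (x 1 + x 2) div 2 + vsum 3 d v x, 2 := (x 2 - x 1) div 2)"

definition rotated_point :: "nat \<Rightarrow> (nat \<Rightarrow> nat) \<Rightarrow> int \<Rightarrow> (nat \<Rightarrow> int) \<Rightarrow> nat \<Rightarrow> int" where
  "rotated_point d v p y = y(1 := y 1 - y 2 - vsum 3 d v y, 2 := y 1 + y 2 + p - vsum 3 d v y)"

lemma rotated_coords_point:
  assumes "p \<in> {0, 1}"
  shows "rotated_coords d v (rotated_point d v p y) = y"
  using assms by (auto simp: rotated_coords_def rotated_point_def fun_eq_iff)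

lemma rotated_point_coords:
  "rotated_point d v ((x 1 + x 2) mod 2) (rotated_coords d v x) = x"
  by (auto simp: rotated_coords_def rotated_point_def fun_eq_iff) presburger+

lemma rotated_point_parity:
  assumes "p \<in> {0, 1}"
  shows "(rotated_point d v p y 1 + rotated_point d v p y 2) mod 2 = p"
  using assms by (auto simp: rotated_point_def) presburger+

lemma volume_Case2_eq:
  assumes "2 \<le> d"
  shows "volume Case2 d v Lv = {x \<in> zd d. rotated_coords d v x \<in> box d (\<lambda>k. {0 .. int (Lv k) - 1})}"
proof -
  have dims: "{1..d} = insert 1 (insert 2 {3..d})"
    using assms by auto
  have vsum: "(\<Sum>k=3..d. real (v k) * real_of_int (x k)) = real_of_int (vsum 3 d v x)" for x
    by (simp add: vsum_def)
  have sum_nonneg: "0 \<le> (real_of_int a + real_of_int b) / 2 + real_of_int s \<longleftrightarrow> 0 \<le> (a + b) div 2 + s"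
    and sum_le: "(real_of_int a + real_of_int b) / 2 + real_of_int s \<le> real M - 1/2
                 \<longleftrightarrow> (a + b) div 2 + s \<le> int M - 1"
    and diff_nonneg: "0 \<le> (real_of_int b - real_of_int a) / 2 \<longleftrightarrow> 0 \<le> (b - a) div 2"
    and diff_le: "(real_of_int b - real_of_int a) / 2 \<le> real M - 1/2 \<longleftrightarrow> (b - a) div 2 \<le> int M - 1"
    for a b s :: int and M :: nat
    using half_nonneg_iff[of "a + b" s] half_le_iff[of "a + b" s M]
      half_nonneg_iff[of "b - a" 0] half_le_iff[of "b - a" 0 M]
    by simp_all
  have "rotated_coords d v x \<in> box d (\<lambda>k. {0 .. int (Lv k) - 1}) \<longleftrightarrow>
      0 \<le> (x 1 + x 2) div 2 + vsum 3 d v x \<and> (x 1 + x 2) div 2 + vsum 3 d v x \<le> int (Lv 1) - 1 \<and>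
      0 \<le> (x 2 - x 1) div 2 \<and> (x 2 - x 1) div 2 \<le> int (Lv 2) - 1 \<and>
      (\<forall>k\<in>{3..d}. 0 \<le> x k \<and> x k \<le> int (Lv k) - 1)" if "x \<in> zd d" for x
    unfolding box_iff dims using that assms by (simp add: rotated_coords_def fun_upd_in_zd)
  then show ?thesis
    unfolding volume.simps vsum sum_nonneg sum_le diff_nonneg diff_le by blast
qed

lemma volj_diff_Case2_eq:
  assumes "j \<in> {1..d}" "m < n" "2 \<le> d"
  shows "volj Case2 d v j L l n - volj Case2 d v j L l m
       = rotated_point d v 0 ` box d (slab j L l m n) \<union> rotated_point d v 1 ` box d (slab j L l m n)"
proof -
  let ?B = "box d (slab j L l m n)"
  have "x \<in> rotated_point d v 0 ` ?B \<union> rotated_point d v 1 ` ?B"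
    if "rotated_coords d v x \<in> ?B" for x
  proof -
    have "(x 1 + x 2) mod 2 \<in> {0, 1}"
      by auto
    then show ?thesis
      using that rotated_point_coords[of d v x] by (metis UnI1 UnI2 image_eqI insertE singletonD)
  qed
  moreover have "rotated_point d v p y \<in> zd d \<and> rotated_coords d v (rotated_point d v p y) \<in> ?B"
    if "p \<in> {0, 1}" "y \<in> ?B" for p y
    using that assms(3) box_subset_zd rotated_coords_point[OF that(1)]
    by (auto simp: rotated_point_def intro!: fun_upd_in_zd)
  ultimately show ?thesis
    unfolding volj_diff_eq_box[OF assms(1,2) volume_Case2_eq[OF assms(3)]] by blast
qed

lemma sum_volj_diff_Case2:
  assumes "j \<in> {1..d}" "m < n" "2 \<le> d"
  shows "finite (volj Case2 d v j L l n - volj Case2 d v j L l m)"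
    and "(\<Sum>x\<in>volj Case2 d v j L l n - volj Case2 d v j L l m. g x)
       = (\<Sum>y\<in>box d (slab j L l m n). g (rotated_point d v 0 y))
         + (\<Sum>y\<in>box d (slab j L l m n). g (rotated_point d v 1 y))"
proof -
  let ?B = "box d (slab j L l m n)"
  have "finite ?B"
    by (rule finite_box) (simp add: slab_def)
  moreover have inj: "inj_on (rotated_point d v p) ?B" if "p \<in> {0, 1}" for p
    by (rule inj_on_inverseI[where g="rotated_coords d v"]) (simp add: rotated_coords_point[OF that])
  moreover have "rotated_point d v 0 ` ?B \<inter> rotated_point d v 1 ` ?B = {}"
  proof (rule equals0I)
    fix x assume "x \<in> rotated_point d v 0 ` ?B \<inter> rotated_point d v 1 ` ?B"
    then obtain y y' where "x = rotated_point d v 0 y" "x = rotated_point d v 1 y'"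
      by blast
    then show False
      using rotated_point_parity[of 0 d v y] rotated_point_parity[of 1 d v y'] by simp
  qed
  ultimately show "finite (volj Case2 d v j L l n - volj Case2 d v j L l m)"
    and "(\<Sum>x\<in>volj Case2 d v j L l n - volj Case2 d v j L l m. g x)
       = (\<Sum>y\<in>?B. g (rotated_point d v 0 y)) + (\<Sum>y\<in>?B. g (rotated_point d v 1 y))"
    unfolding volj_diff_Case2_eq[OF assms(1-3)]
    by (simp_all add: sum.union_disjoint sum.reindex)
qed

lemma prod_atLeastAtMost_split3:
  fixes f :: "nat \<Rightarrow> 'a::comm_monoid_mult"
  assumes "2 \<le> d"
  shows "(\<Prod>k=1..d. f k) = f 1 * f 2 * (\<Prod>k=3..d. f k)"
proof -
  have "{1..d} = insert 1 (insert 2 {3..d})"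
    using assms by auto
  then show ?thesis by (simp add: mult.assoc)
qed

lemma lpow_rotated_point_a:
  fixes la lb :: "nat \<Rightarrow> real"
  assumes "2 \<le> d" "la 2 = 1" "la 1 \<noteq> 0"
  shows "lpow d la (\<lambda>k. 2 * rotated_point d v p y k) = lpow d (tla Case2 la lb v) (\<lambda>k. 2 * y k)"
proof -
  have "lpow d la (\<lambda>k. 2 * rotated_point d v p y k)
      = la 1 powi (2 * y 1) * la 1 powi (-2 * y 2) * (la 1 powi (-2 * vsum 3 d v y) * (\<Prod>k=3..d. la k powi (2 * y k)))"
    unfolding lpow_def prod_atLeastAtMost_split3[OF assms(1)] using assms(2,3)
    by (simp add: rotated_point_def power_int_add[symmetric] algebra_simps)
  also have "la 1 powi (-2 * vsum 3 d v y) * (\<Prod>k=3..d. la k powi (2 * y k))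
      = (\<Prod>k=3..d. tla Case2 la lb v k powi (2 * y k))"
    using prod_powi_twisted[where mu="la 1" and lam=la and i=3] assms(3) by (simp add: mult.commute)
  also have "la 1 powi (-2 * y 2) = tla Case2 la lb v 2 powi (2 * y 2)"
    by (simp add: power_int_minus power_int_inverse)
  also have "la 1 powi (2 * y 1) = tla Case2 la lb v 1 powi (2 * y 1)"
    by simp
  finally show ?thesis
    by (simp only: lpow_def prod_atLeastAtMost_split3[OF assms(1)])
qed

lemma lpow_rotated_point_b:
  fixes la lb :: "nat \<Rightarrow> real"
  assumes "2 \<le> d" "lb 1 = 1" "lb 2 \<noteq> 0"
  shows "lpow d lb (\<lambda>k. 2 * rotated_point d v p y k) = lb 2 powi (2 * p) * lpow d (tlb Case2 la lb v) (\<lambda>k. 2 * y k)"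
proof -
  have "lpow d lb (\<lambda>k. 2 * rotated_point d v p y k)
      = lb 2 powi (2 * p) * (lb 2 powi (2 * y 1) * lb 2 powi (2 * y 2) * (lb 2 powi (-2 * vsum 3 d v y) * (\<Prod>k=3..d. lb k powi (2 * y k))))"
    unfolding lpow_def prod_atLeastAtMost_split3[OF assms(1)] using assms(2,3)
    by (simp add: rotated_point_def power_int_add[symmetric] algebra_simps)
  also have "lb 2 powi (-2 * vsum 3 d v y) * (\<Prod>k=3..d. lb k powi (2 * y k))
      = (\<Prod>k=3..d. tlb Case2 la lb v k powi (2 * y k))"
    using prod_powi_twisted[where mu="lb 2" and lam=lb and i=3] assms(3) by (simp add: mult.commute)
  finally show ?thesis
    by (simp only: lpow_def prod_atLeastAtMost_split3[OF assms(1)] tlb.simps) simp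
qed

lemma tilde_lambdas_pos:
  assumes "\<forall>k\<in>{1..d}. 0 < la k \<and> 0 < lb k" "admissible cs d la lb v" "k \<in> {1..d}"
  shows "0 < tla cs la lb v k \<and> 0 < tlb cs la lb v k"
proof -
  have "0 < la 1" "0 < lb 1"
    using assms(1,3) by auto
  moreover have "0 < lb 2" if "cs = Case2"
    using assms(1,2) that by simp
  ultimately show ?thesis
    using assms by (cases cs) auto
qed

lemma gain_diag_le_product_Case1:
  assumes "\<forall>k\<in>{1..d}. 0 < la k \<and> 0 < lb k" "admissible Case1 d la lb v"
    and "j \<in> {1..d}" "2 \<le> l" "l \<le> L" "m + 2 \<le> n"
  defines "W \<equiv> volj Case1 d v j L l n - volj Case1 d v j L l m"
  shows "(\<Prod>k=1..d. gain (tla Case1 la lb v k) (tlb Case1 la lb v k))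
           * (\<Sum>x\<in>W. lpow d la (\<lambda>k. 2 * x k) * lpow d lb (\<lambda>k. 2 * x k))
       \<le> (\<Sum>x\<in>W. lpow d la (\<lambda>k. 2 * x k)) * (\<Sum>x\<in>W. lpow d lb (\<lambda>k. 2 * x k))"
proof -
  have d: "1 \<le> d" and "m < n"
    using assms(3,6) by auto
  have "tla Case1 la lb v = (\<lambda>k. if k = 1 then la 1 else la k * la 1 powi (- int (v k)))"
    and "tlb Case1 la lb v = (\<lambda>k. if k = 1 then lb 1 else lb k * lb 1 powi (- int (v k)))"
    by (simp_all add: fun_eq_iff)
  moreover have "la 1 \<noteq> 0" "lb 1 \<noteq> 0"
    using bspec[OF assms(1), of 1] d by auto
  ultimately have weights:
      "lpow d la (\<lambda>k. 2 * unshear d v y k) = lpow d (tla Case1 la lb v) (\<lambda>k. 2 * y k)"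
      "lpow d lb (\<lambda>k. 2 * unshear d v y k) = lpow d (tlb Case1 la lb v) (\<lambda>k. 2 * y k)" for y
    by (simp_all add: lpow_unshear[OF d])
  show ?thesis
    unfolding W_def sum_volj_diff_Case1(2)[OF assms(3) \<open>m < n\<close>] weights
    by (rule gain_slab_sums_le) (use tilde_lambdas_pos[OF assms(1,2)] assms(4-6) in auto)
qed

lemma weighted_sums_volj_diff_Case2:
  fixes L l :: nat
  assumes "\<forall>k\<in>{1..d}. 0 < la k \<and> 0 < lb k" "admissible Case2 d la lb v" "j \<in> {1..d}" "m < n"
  defines "W \<equiv> volj Case2 d v j L l n - volj Case2 d v j L l m" and "B \<equiv> box d (slab j L l m n)"
    and "Ta \<equiv> \<lambda>y. lpow d (tla Case2 la lb v) (\<lambda>k. 2 * y k)"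
    and "Tb \<equiv> \<lambda>y. lpow d (tlb Case2 la lb v) (\<lambda>k. 2 * y k)"
  shows "(\<Sum>x\<in>W. lpow d la (\<lambda>k. 2 * x k)) = 2 * (\<Sum>y\<in>B. Ta y)"
    and "(\<Sum>x\<in>W. lpow d lb (\<lambda>k. 2 * x k)) = (1 + lb 2 powi 2) * (\<Sum>y\<in>B. Tb y)"
    and "(\<Sum>x\<in>W. lpow d la (\<lambda>k. 2 * x k) * lpow d lb (\<lambda>k. 2 * x k))
       = (1 + lb 2 powi 2) * (\<Sum>y\<in>B. Ta y * Tb y)"
proof -
  have d: "2 \<le> d" "la 2 = 1" "lb 1 = 1"
    using assms(2) by auto
  moreover have "la 1 \<noteq> 0" "lb 2 \<noteq> 0"
    using bspec[OF assms(1), of 1] bspec[OF assms(1), of 2] d by auto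
  ultimately have wa: "lpow d la (\<lambda>k. 2 * rotated_point d v p y k) = Ta y"
    and wb0: "lpow d lb (\<lambda>k. 2 * rotated_point d v 0 y k) = Tb y"
    and wb1: "lpow d lb (\<lambda>k. 2 * rotated_point d v 1 y k) = lb 2 powi 2 * Tb y" for p y
    using lpow_rotated_point_a lpow_rotated_point_b[where p=0] lpow_rotated_point_b[where p=1]
    by (simp_all add: Ta_def Tb_def)
  show "(\<Sum>x\<in>W. lpow d la (\<lambda>k. 2 * x k)) = 2 * (\<Sum>y\<in>B. Ta y)"
    and "(\<Sum>x\<in>W. lpow d lb (\<lambda>k. 2 * x k)) = (1 + lb 2 powi 2) * (\<Sum>y\<in>B. Tb y)"
    and "(\<Sum>x\<in>W. lpow d la (\<lambda>k. 2 * x k) * lpow d lb (\<lambda>k. 2 * x k))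
       = (1 + lb 2 powi 2) * (\<Sum>y\<in>B. Ta y * Tb y)"
    unfolding W_def B_def sum_volj_diff_Case2(2)[OF assms(3,4) d(1)] wa wb0 wb1
    by (simp_all add: sum_distrib_left sum.distrib algebra_simps)
qed

lemma gain_diag_le_product_Case2:
  assumes "\<forall>k\<in>{1..d}. 0 < la k \<and> 0 < lb k" "admissible Case2 d la lb v"
    and "j \<in> {1..d}" "2 \<le> l" "l \<le> L" "m + 2 \<le> n"
  defines "W \<equiv> volj Case2 d v j L l n - volj Case2 d v j L l m"
  shows "(\<Prod>k=1..d. gain (tla Case2 la lb v k) (tlb Case2 la lb v k))
           * (\<Sum>x\<in>W. lpow d la (\<lambda>k. 2 * x k) * lpow d lb (\<lambda>k. 2 * x k))
       \<le> (\<Sum>x\<in>W. lpow d la (\<lambda>k. 2 * x k)) * (\<Sum>x\<in>W. lpow d lb (\<lambda>k. 2 * x k))"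
proof -
  let ?B = "box d (slab j L l m n)"
  define P where "P = (\<Prod>k=1..d. gain (tla Case2 la lb v k) (tlb Case2 la lb v k))"
  define Ta where "Ta y = lpow d (tla Case2 la lb v) (\<lambda>k. 2 * y k)" for y
  define Tb where "Tb y = lpow d (tlb Case2 la lb v) (\<lambda>k. 2 * y k)" for y
  define \<beta> :: real where "\<beta> = lb 2 powi 2"
  have "0 < Ta y" "0 < Tb y" for y
    using tilde_lambdas_pos[OF assms(1,2)] by (auto simp: Ta_def Tb_def intro!: lpow_pos)
  then have "0 \<le> \<beta>" "0 \<le> (\<Sum>y\<in>?B. Ta y) * (\<Sum>y\<in>?B. Tb y)"
    by (simp_all add: \<beta>_def sum_nonneg less_imp_le)
  moreover have "P * (\<Sum>y\<in>?B. Ta y * Tb y) \<le> (\<Sum>y\<in>?B. Ta y) * (\<Sum>y\<in>?B. Tb y)"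
    unfolding P_def Ta_def Tb_def
    by (rule gain_slab_sums_le) (use tilde_lambdas_pos[OF assms(1,2)] assms(4-6) in auto)
  ultimately have "P * ((1 + \<beta>) * (\<Sum>y\<in>?B. Ta y * Tb y)) \<le> (1 + \<beta>) * ((\<Sum>y\<in>?B. Ta y) * (\<Sum>y\<in>?B. Tb y))"
    by (simp add: mult.left_commute mult_left_mono)
  also have "\<dots> \<le> (2 * (\<Sum>y\<in>?B. Ta y)) * ((1 + \<beta>) * (\<Sum>y\<in>?B. Tb y))"
    using \<open>0 \<le> \<beta>\<close> \<open>0 \<le> (\<Sum>y\<in>?B. Ta y) * (\<Sum>y\<in>?B. Tb y)\<close> by (simp add: mult_ac)
  finally show ?thesis
    using weighted_sums_volj_diff_Case2[OF assms(1-3), of m n L l] assms(6)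
    unfolding W_def P_def Ta_def Tb_def \<beta>_def by simp
qed

theorem lemma2:
  fixes d j L l m n :: nat and la lb :: "nat \<Rightarrow> real" and v :: "nat \<Rightarrow> nat" and cs :: vcase
  assumes pos: "\<forall>k\<in>{1..d}. 0 < la k \<and> 0 < lb k"
    and adm: "admissible cs d la lb v"
    and j: "j \<in> {1..d}"
    and lL: "2 \<le> l" "l \<le> L"
    and mn: "m < n" "2 \<le> n - m"
  shows "Cab d la lb (volj cs d v j L l n - volj cs d v j L l m)
           \<le> Cs d la (volj cs d v j L l n - volj cs d v j L l m)
             * Cs d lb (volj cs d v j L l n - volj cs d v j L l m)
       \<and> Cs d la (volj cs d v j L l n - volj cs d v j L l m)
             * Cs d lb (volj cs d v j L l n - volj cs d v j L l m)
           \<le> ctilde cs d la lb v * Cab d la lb (volj cs d v j L l n - volj cs d v j L l m)"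
proof -
  let ?W = "volj cs d v j L l n - volj cs d v j L l m"
  define P where "P = (\<Prod>k=1..d. gain (tla cs la lb v k) (tlb cs la lb v k))"
  have "finite ?W"
    using sum_volj_diff_Case1(1)[OF j mn(1)] sum_volj_diff_Case2(1)[OF j mn(1)] adm
    by (cases cs) auto
  moreover have "0 \<le> lpow d la (\<lambda>k. 2 * x k) * lpow d lb (\<lambda>k. 2 * x k)" for x
    using pos lpow_pos[of d la] lpow_pos[of d lb] by (simp add: less_imp_le)
  moreover have "1 < P"
    unfolding P_def using j by (intro less_1_prod one_less_gain) auto
  moreover have "P * (\<Sum>x\<in>?W. lpow d la (\<lambda>k. 2 * x k) * lpow d lb (\<lambda>k. 2 * x k))
      \<le> (\<Sum>x\<in>?W. lpow d la (\<lambda>k. 2 * x k)) * (\<Sum>x\<in>?W. lpow d lb (\<lambda>k. 2 * x k))"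
    using gain_diag_le_product_Case1[OF pos _ j lL] gain_diag_le_product_Case2[OF pos _ j lL] adm mn
    unfolding P_def by (cases cs) auto
  ultimately show ?thesis
    unfolding Cab_def Cs_def ctilde_def gain_def[symmetric] P_def[symmetric]
    by (rule offdiag_sum_bounds)
qed

end
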